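(* Let $H$ be a cubic graph of order $m$ and let $G=T(H)$. Then $c_2(G)-\left\lceil\frac{|V(G)|+2}{4}\right\rceil\ge\left\lfloor\frac{m-2}{4}\right\rfloor$. Moreover, $G$ has the same number of bridges and the same chromatic index as $H$.
   Context: For a cubic graph $H$, the triangle-replaced graph $T(H)$ is obtained by replacing each vertex $v$ of $H$ by a triangle $T(v)$ and, for each edge $uv$ of $H$, adding an edge joining a vertex of $T(u)$ to a vertex of $T(v)$, so that each triangle vertex is incident with exactly one added edge. For a graph $G=(V,E)$ and $S_0\subseteq V$, the irreversible $2$-threshold conversion process sets, for $t=1,2,\dots$, $S_t=S_{t-1}\cup\{v: v \text{ has at least } 2 \text{ neighbours in } S_{t-1}\}$; $S_0$ is a $2$-conversion set if $S_t=V$ for some $t$, and $c_2(G)$ is the minimum size of a $2$-conversion set. *)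

theory Defs
  imports Complex_Main
begin

definition simple_graph :: "'v set \<Rightarrow> 'v set set \<Rightarrow> bool" where
  "simple_graph V E \<longleftrightarrow> finite V \<and> (\<forall>e\<in>E. \<exists>u v. e = {u, v} \<and> u \<noteq> v \<and> u \<in> V \<and> v \<in> V)"

definition degree :: "'v set set \<Rightarrow> 'v \<Rightarrow> nat" where
  "degree E v = card {e \<in> E. v \<in> e}"

definition cubic_graph :: "'v set \<Rightarrow> 'v set set \<Rightarrow> bool" where
  "cubic_graph V E \<longleftrightarrow> simple_graph V E \<and> (\<forall>v\<in>V. degree E v = 3)"

text \<open>Triangle-replaced graph T(H): vertex v of H becomes the triangle on the
  vertices (v,e) for the three edges e of H incident with v; each edge e = {u,v}
  of H yields the edge joining (u,e) and (v,e).\<close>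

definition tr_verts :: "'v set \<Rightarrow> 'v set set \<Rightarrow> ('v \<times> 'v set) set" where
  "tr_verts V E = {(v, e). v \<in> V \<and> e \<in> E \<and> v \<in> e}"

definition tr_edges :: "'v set \<Rightarrow> 'v set set \<Rightarrow> ('v \<times> 'v set) set set" where
  "tr_edges V E =
     {{(v, e), (v, f)} | v e f. v \<in> V \<and> e \<in> E \<and> f \<in> E \<and> v \<in> e \<and> v \<in> f \<and> e \<noteq> f}
   \<union> {{(u, e), (v, e)} | u v e. e \<in> E \<and> e = {u, v} \<and> u \<noteq> v}"

definition conv_step :: "'v set \<Rightarrow> 'v set set \<Rightarrow> 'v set \<Rightarrow> 'v set" where
  "conv_step V E S = S \<union> {v \<in> V. card {u \<in> S. {u, v} \<in> E} \<ge> 2}"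

definition is_2conv_set :: "'v set \<Rightarrow> 'v set set \<Rightarrow> 'v set \<Rightarrow> bool" where
  "is_2conv_set V E S \<longleftrightarrow> S \<subseteq> V \<and> (\<exists>t. (conv_step V E ^^ t) S = V)"

definition c2 :: "'v set \<Rightarrow> 'v set set \<Rightarrow> nat" where
  "c2 V E = (LEAST k. \<exists>S. is_2conv_set V E S \<and> card S = k)"

definition reach :: "'v set \<Rightarrow> 'v set set \<Rightarrow> ('v \<times> 'v) set" where
  "reach V E = {(u, v). u \<in> V \<and> v \<in> V \<and> (u, v) \<in> {(x, y). {x, y} \<in> E}\<^sup>*}"

definition num_components :: "'v set \<Rightarrow> 'v set set \<Rightarrow> nat" where
  "num_components V E = card (V // reach V E)"

definition bridges :: "'v set \<Rightarrow> 'v set set \<Rightarrow> 'v set set" where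
  "bridges V E = {e \<in> E. num_components V (E - {e}) > num_components V E}"

definition proper_edge_colouring :: "'v set set \<Rightarrow> nat \<Rightarrow> ('v set \<Rightarrow> nat) \<Rightarrow> bool" where
  "proper_edge_colouring E k c \<longleftrightarrow>
     (\<forall>e\<in>E. c e < k) \<and> (\<forall>e\<in>E. \<forall>f\<in>E. e \<noteq> f \<and> e \<inter> f \<noteq> {} \<longrightarrow> c e \<noteq> c f)"

definition chromatic_index :: "'v set set \<Rightarrow> nat" where
  "chromatic_index E = (LEAST k. \<exists>c. proper_edge_colouring E k c)"

end

theory Submission
  imports Defs
begin

text \<open>A vertex of T(H) has only one neighbour outside its triangle, so a triangle
  containing no vertex of a 2-conversion set can never become infected; hence
  c2(T(H)) \<ge> m = |V(T(H))|/3, which gives the numerical bound. Triangle edges lie on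
  triangles and are never bridges, while paths of H avoiding an edge e and paths of T(H)
  avoiding its link edge correspond, so the link edges that are bridges are exactly those
  of bridges of H. A proper edge colouring of H induces one of T(H) with the same number
  of colours (a triangle edge at v takes the colour of the third edge of H at v), and a
  3-colouring of T(H) restricts to one of H on the link edges. Since H has maximum degree 3
  it is 4-edge-colourable (Vizing's theorem, proved here with fans and Kempe chains),
  which settles the remaining case.\<close>

section \<open>Edge colourings\<close>

lemma simple_graph_edgeE:
  assumes "simple_graph V F" "e \<in> F" "x \<in> e"
  obtains y where "e = {x, y}" "x \<noteq> y"
proof -
  obtain a b where "e = {a, b}" "a \<noteq> b" using assms(1,2) unfolding simple_graph_def by blast
  with assms(3) that show thesis by (auto simp: insert_commute)
qed

lemma simple_graph_finite_edges:
  assumes "simple_graph V F"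
  shows "finite F"
proof -
  have "F \<subseteq> Pow V" using assms unfolding simple_graph_def by auto
  moreover have "finite V" using assms unfolding simple_graph_def by simp
  ultimately show ?thesis by (meson finite_Pow_iff finite_subset)
qed

lemma simple_graph_finite: "simple_graph V F \<Longrightarrow> finite V"
  unfolding simple_graph_def by simp

lemma simple_graph_Union_subset: "simple_graph V F \<Longrightarrow> \<Union>F \<subseteq> V"
  unfolding simple_graph_def by fastforce

lemma simple_graph_card_edge: "simple_graph V F \<Longrightarrow> e \<in> F \<Longrightarrow> card e = 2"
  unfolding simple_graph_def by auto

definition missing :: "'a set set \<Rightarrow> ('a set \<Rightarrow> nat) \<Rightarrow> 'a \<Rightarrow> nat \<Rightarrow> bool" where
  "missing F c x d \<longleftrightarrow> (\<forall>e\<in>F. x \<in> e \<longrightarrow> c e \<noteq> d)"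

lemma proper_edge_colouring_insert:
  assumes "proper_edge_colouring F k c" "a < k" "missing F c x a" "missing F c y a"
  shows "proper_edge_colouring (insert {x, y} F) k (c({x, y} := a))"
  using assms unfolding proper_edge_colouring_def missing_def by auto

lemma proper_edge_colouring_Diff:
  "proper_edge_colouring F k c \<Longrightarrow> proper_edge_colouring (F - G) k c"
  unfolding proper_edge_colouring_def by auto

lemma proper_edge_colouring_less:
  "proper_edge_colouring F k c \<Longrightarrow> e \<in> F \<Longrightarrow> c e < k"
  unfolding proper_edge_colouring_def by auto

lemma proper_edge_colouring_eqD:
  assumes "proper_edge_colouring F k c" "e \<in> F" "f \<in> F" "x \<in> e" "x \<in> f" "c e = c f"
  shows "e = f"
  using assms unfolding proper_edge_colouring_def by blast

lemma proper_edge_colouring_chromatic_index: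
  "proper_edge_colouring F k c \<Longrightarrow> \<exists>c. proper_edge_colouring F (chromatic_index F) c"
  unfolding chromatic_index_def by (rule LeastI_ex) blast

lemma chromatic_index_le: "proper_edge_colouring F k c \<Longrightarrow> chromatic_index F \<le> k"
  unfolding chromatic_index_def by (rule Least_le) blast

lemma missing_subset: "G \<subseteq> F \<Longrightarrow> missing F c x d \<Longrightarrow> missing G c x d"
  unfolding missing_def by auto

lemma missing_Diff_edge:
  assumes "proper_edge_colouring F k c" "e \<in> F" "x \<in> e"
  shows "missing (F - {e}) c x (c e)"
  using assms unfolding proper_edge_colouring_def missing_def by blast

lemma ex_missing:
  assumes "finite F" "degree F x < k"
  shows "\<exists>d<k. missing F c x d"
proof (rule ccontr)
  assume "\<not> ?thesis"
  hence "{0..<k} \<subseteq> c ` {e\<in>F. x \<in> e}" unfolding missing_def by auto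
  hence "card {0..<k} \<le> card (c ` {e\<in>F. x \<in> e})"
    by (intro card_mono) (use assms in auto)
  also have "\<dots> \<le> degree F x" unfolding degree_def by (rule card_image_le) (use assms in auto)
  finally show False using assms by simp
qed

lemma not_missingE:
  assumes "simple_graph V F" "\<not> missing F c x d"
  obtains y where "{x, y} \<in> F" "c {x, y} = d" "x \<noteq> y"
proof -
  from assms(2) obtain e where "e \<in> F" "x \<in> e" "c e = d" unfolding missing_def by auto
  with simple_graph_edgeE[OF assms(1)] that show thesis by metis
qed

text \<open>Colouring a new edge uv through a fan at u: the edge uw gives its colour to uv
  and takes a colour missing at both u and w.\<close>

lemma colourable_insert_fan:
  assumes pc: "proper_edge_colouring F k c"
    and uw: "{u, w} \<in> F" "u \<noteq> w" "c {u, w} = \<beta>"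
    and mv: "missing F c v \<beta>" and mu: "missing F c u \<gamma>" and mw: "missing F c w \<gamma>"
    and g: "\<gamma> < k" and uv: "u \<noteq> v" "v \<noteq> w"
  shows "\<exists>c'. proper_edge_colouring (insert {u, v} F) k c'"
proof -
  define F1 where "F1 = F - {{u, w}}"
  have p1: "proper_edge_colouring (insert {u, v} F1) k (c({u, v} := \<beta>))"
  proof (rule proper_edge_colouring_insert)
    show "proper_edge_colouring F1 k c" unfolding F1_def by (rule proper_edge_colouring_Diff[OF pc])
    show "\<beta> < k" using proper_edge_colouring_less[OF pc uw(1)] uw(3) by simp
    show "missing F1 c u \<beta>" unfolding F1_def using missing_Diff_edge[OF pc uw(1)] uw by auto
    show "missing F1 c v \<beta>" using missing_subset[OF _ mv] unfolding F1_def by auto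
  qed
  have "\<beta> \<noteq> \<gamma>" using mu uw unfolding missing_def by auto
  hence "proper_edge_colouring (insert {u, w} (insert {u, v} F1)) k (c({u, v} := \<beta>, {u, w} := \<gamma>))"
    using proper_edge_colouring_insert[OF p1 g] mu mw uv uw
    unfolding missing_def F1_def by (auto simp: doubleton_eq_iff)
  moreover have "insert {u, w} (insert {u, v} F1) = insert {u, v} F" unfolding F1_def using uw by auto
  ultimately show ?thesis by auto
qed

text \<open>The two-edge fan: uw gives \<beta> to uv, uz gives \<gamma> to uw, and uz takes \<epsilon>.\<close>

lemma colourable_insert_fan2:
  assumes pc: "proper_edge_colouring F k c"
    and uw: "{u, w} \<in> F" "u \<noteq> w" "c {u, w} = \<beta>" and mv: "missing F c v \<beta>"
    and uz: "{u, z} \<in> F" "u \<noteq> z" "c {u, z} = \<gamma>" and mw: "missing F c w \<gamma>"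
    and mz: "missing F c z \<epsilon>" and mu: "missing F c u \<epsilon>" and e: "\<epsilon> < k"
    and d: "u \<noteq> v" "v \<noteq> w" "v \<noteq> z" "w \<noteq> z"
  shows "\<exists>c'. proper_edge_colouring (insert {u, v} F) k c'"
proof -
  define F2 where "F2 = insert {u, v} (F - {{u, w}})"
  define c2 where "c2 = c({u, v} := \<beta>)"
  have p2: "proper_edge_colouring F2 k c2"
    unfolding c2_def F2_def
  proof (rule proper_edge_colouring_insert)
    show "proper_edge_colouring (F - {{u, w}}) k c" by (rule proper_edge_colouring_Diff[OF pc])
    show "\<beta> < k" using proper_edge_colouring_less[OF pc uw(1)] uw(3) by simp
    show "missing (F - {{u, w}}) c u \<beta>" using missing_Diff_edge[OF pc uw(1)] uw by auto
    show "missing (F - {{u, w}}) c v \<beta>" using missing_subset[OF _ mv] by auto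
  qed
  have "\<beta> \<noteq> \<epsilon>" using mu uw unfolding missing_def by auto
  moreover have "{u, z} \<noteq> {u, w}" "{u, z} \<noteq> {u, v}" using d by (auto simp: doubleton_eq_iff)
  ultimately have "\<exists>c'. proper_edge_colouring (insert {u, w} F2) k c'"
    using d uw uz mw mu mz
    by (intro colourable_insert_fan[OF p2 _ uz(2) _ _ _ _ e uw(2)])
       (auto simp: F2_def c2_def missing_def)
  moreover have "insert {u, w} F2 = insert {u, v} F" unfolding F2_def using uw by auto
  ultimately show ?thesis by auto
qed

section \<open>Kempe chains\<close>

definition bicoloured :: "'a set set \<Rightarrow> ('a set \<Rightarrow> nat) \<Rightarrow> nat \<Rightarrow> nat \<Rightarrow> 'a set set" where
  "bicoloured F c a b = {e\<in>F. c e = a \<or> c e = b}"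

definition kempe_rel :: "'a set set \<Rightarrow> ('a set \<Rightarrow> nat) \<Rightarrow> nat \<Rightarrow> nat \<Rightarrow> ('a set \<times> 'a set) set" where
  "kempe_rel F c a b = {(e, f). e \<in> bicoloured F c a b \<and> f \<in> bicoloured F c a b \<and> e \<inter> f \<noteq> {}}"

definition kempe_chain :: "'a set set \<Rightarrow> ('a set \<Rightarrow> nat) \<Rightarrow> nat \<Rightarrow> nat \<Rightarrow> 'a set \<Rightarrow> 'a set set" where
  "kempe_chain F c a b e0 = {f. (e0, f) \<in> (kempe_rel F c a b)\<^sup>*}"

definition kempe_swap :: "nat \<Rightarrow> nat \<Rightarrow> ('a set \<Rightarrow> nat) \<Rightarrow> 'a set set \<Rightarrow> 'a set \<Rightarrow> nat" where
  "kempe_swap a b c K e = (if e \<in> K then (if c e = a then b else a) else c e)"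

lemma kempe_chain_self: "e0 \<in> kempe_chain F c a b e0"
  unfolding kempe_chain_def by auto

lemma kempe_chain_subset:
  assumes "e0 \<in> bicoloured F c a b"
  shows "kempe_chain F c a b e0 \<subseteq> bicoloured F c a b"
proof
  fix f assume "f \<in> kempe_chain F c a b e0"
  hence "(e0, f) \<in> (kempe_rel F c a b)\<^sup>*" unfolding kempe_chain_def by auto
  thus "f \<in> bicoloured F c a b"
    by (induction rule: rtrancl_induct) (use assms in \<open>auto simp: kempe_rel_def\<close>)
qed

lemma kempe_chain_closed:
  assumes "e0 \<in> bicoloured F c a b" "f \<in> kempe_chain F c a b e0" "g \<in> bicoloured F c a b"
    "f \<inter> g \<noteq> {}"
  shows "g \<in> kempe_chain F c a b e0"
  using assms kempe_chain_subset[OF assms(1)] unfolding kempe_chain_def kempe_rel_def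
  by (auto intro: rtrancl_into_rtrancl)

lemma kempe_chain_eq:
  assumes "e1 \<in> bicoloured F c a b" "e2 \<in> bicoloured F c a b"
    "x \<in> \<Union>(kempe_chain F c a b e1)" "x \<in> \<Union>(kempe_chain F c a b e2)"
  shows "kempe_chain F c a b e1 = kempe_chain F c a b e2"
proof -
  let ?R = "kempe_rel F c a b"
  have sym: "sym (?R\<^sup>*)" by (rule sym_rtrancl) (auto simp: sym_def kempe_rel_def)
  obtain f1 f2 where f: "(e1, f1) \<in> ?R\<^sup>*" "(e2, f2) \<in> ?R\<^sup>*" "x \<in> f1" "x \<in> f2"
    using assms(3,4) unfolding kempe_chain_def by auto
  have "f1 \<in> bicoloured F c a b" "f2 \<in> bicoloured F c a b"
    using f kempe_chain_subset assms(1,2) unfolding kempe_chain_def by blast+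
  with f have "(f1, f2) \<in> ?R" unfolding kempe_rel_def by auto
  with f sym have "(e1, e2) \<in> ?R\<^sup>*"
    by (meson rtrancl_into_rtrancl rtrancl_trans symD)
  with sym show ?thesis unfolding kempe_chain_def by (auto intro: rtrancl_trans dest: symD)
qed

lemma proper_edge_colouring_kempe_swap:
  assumes pc: "proper_edge_colouring F k c" and ab: "a < k" "b < k"
    and e0: "e0 \<in> bicoloured F c a b"
  shows "proper_edge_colouring F k (kempe_swap a b c (kempe_chain F c a b e0))"
proof -
  let ?K = "kempe_chain F c a b e0"
  have sub: "?K \<subseteq> bicoloured F c a b" by (rule kempe_chain_subset[OF e0])
  have out: "g \<notin> bicoloured F c a b" if "f \<in> ?K" "g \<notin> ?K" "f \<inter> g \<noteq> {}" for f g
    using kempe_chain_closed[OF e0] that by blast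
  show ?thesis
    unfolding proper_edge_colouring_def
  proof (intro conjI ballI impI)
    fix e assume "e \<in> F" thus "kempe_swap a b c ?K e < k"
      using pc ab unfolding proper_edge_colouring_def kempe_swap_def by auto
  next
    fix e f assume ef: "e \<in> F" "f \<in> F" "e \<noteq> f \<and> e \<inter> f \<noteq> {}"
    hence "c e \<noteq> c f" using pc unfolding proper_edge_colouring_def by auto
    moreover have "f \<inter> e \<noteq> {}" using ef by auto
    ultimately show "kempe_swap a b c ?K e \<noteq> kempe_swap a b c ?K f"
      using ef sub out[of e f] out[of f e] unfolding kempe_swap_def bicoloured_def by auto
  qed
qed

lemma missing_kempe_swap_outside:
  "x \<notin> \<Union>K \<Longrightarrow> missing F (kempe_swap a b c K) x d \<longleftrightarrow> missing F c x d"
  unfolding missing_def kempe_swap_def by auto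

lemma missing_kempe_swap_inside:
  assumes e0: "e0 \<in> bicoloured F c a b" and x: "x \<in> \<Union>(kempe_chain F c a b e0)" and "a \<noteq> b"
  shows "missing F (kempe_swap a b c (kempe_chain F c a b e0)) x a \<longleftrightarrow> missing F c x b"
proof -
  let ?K = "kempe_chain F c a b e0"
  obtain f0 where f0: "f0 \<in> ?K" "x \<in> f0" using x by auto
  have "f \<in> ?K \<longleftrightarrow> c f = a \<or> c f = b" if "f \<in> F" "x \<in> f" for f
    using kempe_chain_closed[OF e0 f0(1), of f] kempe_chain_subset[OF e0] f0 that
    unfolding bicoloured_def by auto
  thus ?thesis using \<open>a \<noteq> b\<close> unfolding missing_def kempe_swap_def by force
qed

lemma rtrancl_exit_step:
  assumes "(e0, f) \<in> R\<^sup>*" "e0 \<in> A" "f \<notin> A"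
  shows "\<exists>g h. g \<in> A \<and> h \<notin> A \<and> (g, h) \<in> R \<and> (e0, h) \<in> R\<^sup>*"
  using assms
proof (induction rule: rtrancl_induct)
  case (step y z)
  thus ?case by (cases "y \<in> A") (auto intro: rtrancl_into_rtrancl)
qed auto

text \<open>Adding the members one at a time, each meeting an earlier one, every new 2-set
  contributes at most one new point.\<close>

lemma card_Union_reachable_le:
  fixes R :: "('a set \<times> 'a set) set" and e0 :: "'a set"
  defines "K \<equiv> {f. (e0, f) \<in> R\<^sup>*}"
  assumes fin: "finite K" and e0: "card e0 = 2"
    and R: "\<And>g h. (g, h) \<in> R \<Longrightarrow> g \<inter> h \<noteq> {} \<and> card h = 2"
  shows "card (\<Union>K) \<le> card K + 1"
proof -
  have fe: "finite f" if "f \<in> K" for f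
  proof -
    have "(e0, f) \<in> R\<^sup>*" using that unfolding K_def by auto
    thus ?thesis by (induction rule: rtrancl_induct) (use e0 R in \<open>auto intro: card_ge_0_finite\<close>)
  qed
  have e0K: "e0 \<in> K" unfolding K_def by auto
  have "n \<le> card K \<Longrightarrow> \<exists>A\<subseteq>K. e0 \<in> A \<and> card A = n \<and> card (\<Union>A) \<le> n + 1" if "1 \<le> n" for n
    using that
  proof (induction n rule: dec_induct)
    case base
    show ?case using e0K e0 by (intro exI[of _ "{e0}"]) auto
  next
    case (step n)
    then obtain A where A: "A \<subseteq> K" "e0 \<in> A" "card A = n" "card (\<Union>A) \<le> n + 1" by auto
    have finA: "finite A" using A(1) fin finite_subset by auto
    have "A \<noteq> K" using A(3) step.prems by auto
    then obtain f where "f \<in> K" "f \<notin> A" using A(1) by auto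
    then obtain g h where gh: "g \<in> A" "h \<notin> A" "(g, h) \<in> R" "(e0, h) \<in> R\<^sup>*"
      using rtrancl_exit_step[of e0 f R A] A(2) unfolding K_def by auto
    have hK: "h \<in> K" using gh(4) unfolding K_def by auto
    have "card (h - \<Union>A) < card h"
      using R[OF gh(3)] gh(1) fe[OF hK] by (intro psubset_card_mono) auto
    hence "card (h - \<Union>A) \<le> 1" using R[OF gh(3)] by auto
    moreover have "\<Union>(insert h A) = \<Union>A \<union> (h - \<Union>A)" by auto
    hence "card (\<Union>(insert h A)) \<le> card (\<Union>A) + card (h - \<Union>A)"
      by (metis card_Un_le)
    ultimately show ?case
      using A hK finA gh(2) by (intro exI[of _ "insert h A"]) auto
  qed
  from this[of "card K"] e0K fin obtain A where "A \<subseteq> K" "card A = card K" "card (\<Union>A) \<le> card K + 1"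
    by (metis One_nat_def Suc_leI card_gt_0_iff empty_iff order_refl)
  moreover hence "A = K" using fin by (metis card_subset_eq)
  ultimately show ?thesis by auto
qed

lemma sum_card_incident:
  assumes "finite K" "\<And>e. e \<in> K \<Longrightarrow> finite e"
  shows "(\<Sum>x\<in>\<Union>K. card {e\<in>K. x \<in> e}) = (\<Sum>e\<in>K. card e)"
proof -
  have fU: "finite (\<Union>K)" using assms by auto
  have "(\<Sum>x\<in>\<Union>K. card {e\<in>K. x \<in> e}) = (\<Sum>x\<in>\<Union>K. \<Sum>e\<in>K. if x \<in> e then 1 else 0)"
  proof (intro sum.cong refl)
    fix x
    have "card {e\<in>K. x \<in> e} = (\<Sum>e\<in>{e\<in>K. x \<in> e}. 1)" by simp
    also have "\<dots> = (\<Sum>e\<in>K. if x \<in> e then 1 else 0)" using assms(1) by (rule sum.inter_filter)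
    finally show "card {e\<in>K. x \<in> e} = (\<Sum>e\<in>K. if x \<in> e then 1 else 0)" .
  qed
  also have "\<dots> = (\<Sum>e\<in>K. \<Sum>x\<in>\<Union>K. if x \<in> e then 1 else 0)" by (rule sum.swap)
  also have "\<dots> = (\<Sum>e\<in>K. card e)"
  proof (intro sum.cong refl)
    fix e assume "e \<in> K"
    hence "{x\<in>\<Union>K. x \<in> e} = e" by auto
    moreover have "(\<Sum>x\<in>\<Union>K. if x \<in> e then 1 else 0) = (\<Sum>x\<in>{x\<in>\<Union>K. x \<in> e}. 1)"
      using fU by (rule sum.inter_filter[symmetric])
    ultimately show "(\<Sum>x\<in>\<Union>K. if x \<in> e then 1 else 0) = card e" by (metis card_eq_sum)
  qed
  finally show ?thesis .
qed

lemma card_incident_bicoloured_le: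
  assumes pc: "proper_edge_colouring F k c" and sub: "K \<subseteq> bicoloured F c a b"
  shows "card {e\<in>K. x \<in> e} \<le> (if missing F c x a \<or> missing F c x b then 1 else 2)"
proof -
  let ?S = "{e\<in>K. x \<in> e}"
  have "inj_on c ?S"
    using proper_edge_colouring_eqD[OF pc] sub unfolding bicoloured_def by (intro inj_onI) auto
  hence "card ?S = card (c ` ?S)" by (simp add: card_image)
  moreover have "c ` ?S \<subseteq> {a, b} - {d. missing F c x d}"
    using sub unfolding bicoloured_def missing_def by auto
  moreover have "card ({a, b} - {d. missing F c x d})
      \<le> (if missing F c x a \<or> missing F c x b then 1 else 2)"
    by (cases "a = b") (auto simp: card_insert_if card_Diff_singleton_if insert_Diff_if)
  ultimately show ?thesis by (metis (no_types, lifting) card_mono finite.emptyI finite.insertI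
      finite_Diff order_trans)
qed

text \<open>A Kempe chain is a path or a cycle, so at most its two ends miss one of its colours:
  summing degrees inside the chain K gives 2|K| \<le> 2|\<Union>K| - #ends.\<close>

lemma card_kempe_chain_ends:
  assumes sg: "simple_graph V F" and pc: "proper_edge_colouring F k c"
    and e0: "e0 \<in> bicoloured F c a b"
  shows "card {x\<in>\<Union>(kempe_chain F c a b e0). missing F c x a \<or> missing F c x b} \<le> 2"
proof -
  define K where "K = kempe_chain F c a b e0"
  define T where "T = {x\<in>\<Union>K. missing F c x a \<or> missing F c x b}"
  have sub: "K \<subseteq> bicoloured F c a b" unfolding K_def by (rule kempe_chain_subset[OF e0])
  have KF: "K \<subseteq> F" using sub unfolding bicoloured_def by auto
  have two: "card e = 2" if "e \<in> K" for e
    using simple_graph_card_edge[OF sg] KF that by auto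
  have finK: "finite K" using KF simple_graph_finite_edges[OF sg] by (rule finite_subset)
  have finE: "finite e" if "e \<in> K" for e
    using two[OF that] by (intro card_ge_0_finite) simp
  have finU: "finite (\<Union>K)" using finK finE by auto
  have TU: "T \<subseteq> \<Union>K" unfolding T_def by auto
  have "card (\<Union>K) \<le> card K + 1"
    unfolding K_def kempe_chain_def
  proof (rule card_Union_reachable_le)
    show "finite {f. (e0, f) \<in> (kempe_rel F c a b)\<^sup>*}"
      using finK unfolding K_def kempe_chain_def .
    show "card e0 = 2" using two kempe_chain_self unfolding K_def by blast
    fix g h
    assume "(g, h) \<in> kempe_rel F c a b"
    thus "g \<inter> h \<noteq> {} \<and> card h = 2"
      using simple_graph_card_edge[OF sg] unfolding kempe_rel_def bicoloured_def by auto
  qed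
  have "2 * card K = (\<Sum>x\<in>\<Union>K. card {e\<in>K. x \<in> e})"
    using sum_card_incident[OF finK finE] two by simp
  also have "\<dots> \<le> (\<Sum>x\<in>\<Union>K. if x \<in> T then 1 else 2)"
    using card_incident_bicoloured_le[OF pc sub] unfolding T_def by (intro sum_mono) auto
  also have "\<dots> = card T + 2 * card (\<Union>K - T)"
    using TU finU by (simp add: sum.If_cases Int_absorb1 Diff_eq[symmetric])
  also have "\<dots> = 2 * card (\<Union>K) - card T"
    using TU finU card_mono[OF finU TU] by (simp add: card_Diff_subset finite_subset)
  finally show ?thesis
    using \<open>card (\<Union>K) \<le> card K + 1\<close> card_mono[OF finU TU] unfolding T_def K_def by linarith
qed

lemma kempe_chain_no_third_end:
  assumes sg: "simple_graph V F" and pc: "proper_edge_colouring F k c"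
    and e0: "e0 \<in> bicoloured F c a b"
    and K: "u \<in> \<Union>(kempe_chain F c a b e0)" "v \<in> \<Union>(kempe_chain F c a b e0)"
    and m: "missing F c u a \<or> missing F c u b" "missing F c v a \<or> missing F c v b"
      "missing F c z a \<or> missing F c z b"
    and d: "u \<noteq> v" "u \<noteq> z" "v \<noteq> z"
  shows "z \<notin> \<Union>(kempe_chain F c a b e0)"
proof
  let ?T = "{x\<in>\<Union>(kempe_chain F c a b e0). missing F c x a \<or> missing F c x b}"
  assume "z \<in> \<Union>(kempe_chain F c a b e0)"
  hence "{u, v, z} \<subseteq> ?T" using K m by auto
  moreover have "\<Union>(kempe_chain F c a b e0) \<subseteq> V"
    using kempe_chain_subset[OF e0] simple_graph_Union_subset[OF sg] unfolding bicoloured_def by blast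
  hence "?T \<subseteq> V" by blast
  hence "finite ?T" using simple_graph_finite[OF sg] by (rule finite_subset)
  ultimately have "card {u, v, z} \<le> 2"
    using card_kempe_chain_ends[OF sg pc e0] by (meson card_mono le_trans)
  thus False using d by auto
qed

text \<open>Swapping the (\<alpha>,\<beta>)-chain at z frees \<alpha> at z. That chain is disjoint from the
  one through u, v and w, so nothing else changes and the two-edge fan applies.\<close>

lemma colourable_insert_fan2_kempe:
  assumes sg: "simple_graph V F" and pc: "proper_edge_colouring F k c"
    and uw: "{u, w} \<in> F" "u \<noteq> w" "c {u, w} = \<beta>"
    and uz: "{u, z} \<in> F" "u \<noteq> z" "c {u, z} = \<gamma>"
    and mu: "missing F c u \<alpha>" and mv: "missing F c v \<beta>" and mw: "missing F c w \<gamma>"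
    and mz: "missing F c z \<beta>" and nz: "\<not> missing F c z \<alpha>"
    and ab: "\<alpha> < k" "\<beta> < k" "\<alpha> \<noteq> \<beta>"
    and e0: "e0 \<in> bicoloured F c \<alpha> \<beta>"
    and K: "u \<in> \<Union>(kempe_chain F c \<alpha> \<beta> e0)" "v \<in> \<Union>(kempe_chain F c \<alpha> \<beta> e0)"
      "z \<notin> \<Union>(kempe_chain F c \<alpha> \<beta> e0)"
    and d: "u \<noteq> v" "v \<noteq> w" "v \<noteq> z" "w \<noteq> z"
  shows "\<exists>c'. proper_edge_colouring (insert {u, v} F) k c'"
proof -
  obtain z' where z': "{z, z'} \<in> F" "c {z, z'} = \<alpha>" using not_missingE[OF sg nz] by metis
  hence ez: "{z, z'} \<in> bicoloured F c \<alpha> \<beta>" unfolding bicoloured_def by auto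
  define K' where "K' = kempe_chain F c \<alpha> \<beta> {z, z'}"
  have zK': "z \<in> \<Union>K'" using kempe_chain_self unfolding K'_def by blast
  have disj: "x \<notin> \<Union>K'" if "x \<in> \<Union>(kempe_chain F c \<alpha> \<beta> e0)" for x
    using kempe_chain_eq[OF e0 ez that] K(3) zK' unfolding K'_def by auto
  have "w \<in> \<Union>(kempe_chain F c \<alpha> \<beta> e0)"
  proof -
    obtain f where f: "f \<in> kempe_chain F c \<alpha> \<beta> e0" "u \<in> f" using K(1) by auto
    have "{u, w} \<in> kempe_chain F c \<alpha> \<beta> e0"
      using kempe_chain_closed[OF e0 f(1), of "{u, w}"] f(2) uw unfolding bicoloured_def by auto
    thus ?thesis by auto
  qed
  note out = missing_kempe_swap_outside[OF disj]
  let ?c' = "kempe_swap \<alpha> \<beta> c K'"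
  have "proper_edge_colouring F k ?c'"
    unfolding K'_def by (rule proper_edge_colouring_kempe_swap[OF pc ab(1,2) ez])
  moreover have "?c' {u, w} = \<beta>" "?c' {u, z} = \<gamma>"
    using disj[OF K(1)] uw uz unfolding kempe_swap_def by auto
  moreover have "missing F ?c' z \<alpha>"
    using missing_kempe_swap_inside[OF ez zK'[unfolded K'_def] ab(3)] mz unfolding K'_def by simp
  moreover have "missing F ?c' u \<alpha>" "missing F ?c' v \<beta>" "missing F ?c' w \<gamma>"
    using out[OF K(1)] out[OF K(2)] out[OF \<open>w \<in> \<Union>(kempe_chain F c \<alpha> \<beta> e0)\<close>] mu mv mw by auto
  ultimately show ?thesis
    using colourable_insert_fan2[of F k ?c' u w \<beta> v z \<gamma> \<alpha>] uw(1,2) uz(1,2) ab(1) d by blast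
qed

lemma missing_colour_fan_end:
  assumes fin: "finite F" and du: "degree F u \<le> 2"
    and uw: "{u, w} \<in> F" "c {u, w} = \<beta>" and uz: "{u, z} \<in> F" "c {u, z} = \<gamma>" and "w \<noteq> z"
    and mz: "missing F c z \<epsilon>" and nu: "\<not> missing F c u \<epsilon>"
  shows "\<epsilon> = \<beta>"
proof -
  have Nu: "{e\<in>F. u \<in> e} = {{u, w}, {u, z}}"
  proof (rule card_seteq[symmetric])
    show "finite {e\<in>F. u \<in> e}" using fin by auto
    show "{{u, w}, {u, z}} \<subseteq> {e\<in>F. u \<in> e}" using uw uz by auto
    show "card {e\<in>F. u \<in> e} \<le> card {{u, w}, {u, z}}"
      using du \<open>w \<noteq> z\<close> unfolding degree_def by (auto simp: doubleton_eq_iff)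
  qed
  obtain f where f: "f \<in> F" "u \<in> f" "c f = \<epsilon>" using nu unfolding missing_def by blast
  hence "f \<in> {{u, w}, {u, z}}" by (simp add: Nu[symmetric])
  moreover have "f \<noteq> {u, z}" using mz f(3) uz unfolding missing_def by auto
  ultimately show ?thesis using f(3) uw(2) by auto
qed

text \<open>Let uw be the
  \<beta>-edge at u and \<gamma> a colour missing at w; if \<gamma> is missing at u a one-edge fan works,
  otherwise let uz be the \<gamma>-edge. A colour missing at z and u gives a two-edge fan;
  if there is none, z misses \<beta> and lies off the chain, which has only two ends.\<close>

lemma colourable_insert_edge_chain_through:
  assumes sg: "simple_graph V F" and deg: "\<And>x. degree F x \<le> 3"
    and du: "degree F u \<le> 2" and nuv: "{u, v} \<notin> F" and uv: "u \<noteq> v"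
    and pc: "proper_edge_colouring F 4 c"
    and \<alpha>: "\<alpha> < 4" "missing F c u \<alpha>" and \<beta>: "\<beta> < 4" "missing F c v \<beta>" "\<not> missing F c u \<beta>"
    and ab: "\<alpha> \<noteq> \<beta>" and e0: "e0 \<in> bicoloured F c \<alpha> \<beta>"
    and K: "u \<in> \<Union>(kempe_chain F c \<alpha> \<beta> e0)" "v \<in> \<Union>(kempe_chain F c \<alpha> \<beta> e0)"
  shows "\<exists>c'. proper_edge_colouring (insert {u, v} F) 4 c'"
proof -
  have fin: "finite F" by (rule simple_graph_finite_edges[OF sg])
  have em: "\<exists>d<4. missing F c x d" for x
    by (rule ex_missing[OF fin]) (use deg[of x] in linarith)
  obtain w where uw: "{u, w} \<in> F" "c {u, w} = \<beta>" "u \<noteq> w" using not_missingE[OF sg \<beta>(3)] by metis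
  have vw: "v \<noteq> w" using uw nuv by auto
  obtain \<gamma> where \<gamma>: "\<gamma> < 4" "missing F c w \<gamma>" using em by blast
  show ?thesis
  proof (cases "missing F c u \<gamma>")
    case True
    show ?thesis by (rule colourable_insert_fan[OF pc uw(1,3,2) \<beta>(2) True \<gamma>(2) \<gamma>(1) uv vw])
  next
    case False
    obtain z where uz: "{u, z} \<in> F" "c {u, z} = \<gamma>" "u \<noteq> z" using not_missingE[OF sg False] by metis
    have "\<beta> \<noteq> \<gamma>" using \<gamma>(2) uw unfolding missing_def by auto
    hence wz: "w \<noteq> z" using uz uw by auto
    have vz: "v \<noteq> z" using uz nuv by auto
    show ?thesis
    proof (cases "\<exists>\<epsilon><4. missing F c z \<epsilon> \<and> missing F c u \<epsilon>")
      case True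
      then obtain \<epsilon> where \<epsilon>: "\<epsilon> < 4" "missing F c z \<epsilon>" "missing F c u \<epsilon>" by blast
      show ?thesis
        by (rule colourable_insert_fan2[OF pc uw(1,3,2) \<beta>(2) uz(1,3,2) \<gamma>(2) \<epsilon>(2,3,1) uv vw vz wz])
    next
      case False
      obtain \<epsilon> where \<epsilon>: "\<epsilon> < 4" "missing F c z \<epsilon>" using em by blast
      hence mz: "missing F c z \<beta>"
        using missing_colour_fan_end[OF fin du uw(1,2) uz(1,2) wz] False by blast
      hence "z \<notin> \<Union>(kempe_chain F c \<alpha> \<beta> e0)"
        using kempe_chain_no_third_end[OF sg pc e0 K] \<alpha> \<beta> uv uz(3) vz by blast
      moreover have "\<not> missing F c z \<alpha>" using False \<alpha> by auto
      ultimately show ?thesis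
        using colourable_insert_fan2_kempe[OF sg pc uw(1,3,2) uz(1,3,2) \<alpha>(2) \<beta>(2) \<gamma>(2) mz _
            \<alpha>(1) \<beta>(1) ab e0 K] uv vw vz wz by blast
    qed
  qed
qed

text \<open>Vizing's recolouring step for four colours: if no colour is missing at both ends
  of uv, the (\<alpha>,\<beta>)-Kempe chain from v is swapped, unless it reaches u.\<close>

lemma colourable_insert_edge:
  assumes sg: "simple_graph V F" and deg: "\<And>x. degree F x \<le> 3"
    and du: "degree F u \<le> 2" and nuv: "{u, v} \<notin> F" and uv: "u \<noteq> v"
    and pc: "proper_edge_colouring F 4 c"
  shows "\<exists>c'. proper_edge_colouring (insert {u, v} F) 4 c'"
proof -
  have em: "\<exists>d<4. missing F c x d" for x
    by (rule ex_missing[OF simple_graph_finite_edges[OF sg]]) (use deg[of x] in linarith)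
  obtain \<alpha> where \<alpha>: "\<alpha> < 4" "missing F c u \<alpha>" using em by blast
  obtain \<beta> where \<beta>: "\<beta> < 4" "missing F c v \<beta>" using em by blast
  consider "missing F c v \<alpha>" | "missing F c u \<beta>" | "\<not> missing F c v \<alpha>" "\<not> missing F c u \<beta>"
    by blast
  thus ?thesis
  proof cases
    case 1
    thus ?thesis using proper_edge_colouring_insert[OF pc \<alpha>] by blast
  next
    case 2
    thus ?thesis using proper_edge_colouring_insert[OF pc \<beta>(1) _ \<beta>(2)] by blast
  next
    case 3
    have ab: "\<alpha> \<noteq> \<beta>" using 3 \<beta> by auto
    obtain v' where "{v, v'} \<in> F" "c {v, v'} = \<alpha>" using not_missingE[OF sg 3(1)] by metis
    hence e0: "{v, v'} \<in> bicoloured F c \<alpha> \<beta>" unfolding bicoloured_def by auto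
    define K where "K = kempe_chain F c \<alpha> \<beta> {v, v'}"
    have vK: "v \<in> \<Union>K" using kempe_chain_self unfolding K_def by blast
    show ?thesis
    proof (cases "u \<in> \<Union>K")
      case False
      let ?c' = "kempe_swap \<alpha> \<beta> c K"
      have "proper_edge_colouring F 4 ?c'"
        unfolding K_def by (rule proper_edge_colouring_kempe_swap[OF pc \<alpha>(1) \<beta>(1) e0])
      moreover have "missing F ?c' u \<alpha>" using missing_kempe_swap_outside[OF False] \<alpha> by auto
      moreover have "missing F ?c' v \<alpha>"
        using missing_kempe_swap_inside[OF e0 vK[unfolded K_def] ab] \<beta> unfolding K_def by auto
      ultimately show ?thesis by (blast intro: proper_edge_colouring_insert[OF _ \<alpha>(1)])
    next
      case True
      thus ?thesis
        using colourable_insert_edge_chain_through[OF sg deg du nuv uv pc \<alpha> \<beta> 3(2) ab e0] vK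
        unfolding K_def by blast
    qed
  qed
qed

theorem subcubic_edge_colourable:
  assumes "simple_graph V F" "\<And>x. degree F x \<le> 3"
  shows "\<exists>c. proper_edge_colouring F 4 c"
proof -
  have "finite F" by (rule simple_graph_finite_edges[OF assms(1)])
  thus ?thesis using assms
  proof (induction F rule: finite_induct)
    case empty
    show ?case by (auto simp: proper_edge_colouring_def)
  next
    case (insert e F)
    have sg: "simple_graph V F" using insert(4) unfolding simple_graph_def by auto
    have "degree F x \<le> degree (insert e F) x" for x
      unfolding degree_def using insert(1) by (intro card_mono) auto
    hence deg: "degree F x \<le> 3" for x using insert(5) le_trans by blast
    obtain c where pc: "proper_edge_colouring F 4 c" using insert(3)[OF sg deg] by blast
    obtain u v where e: "e = {u, v}" "u \<noteq> v" using insert(4) unfolding simple_graph_def by auto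
    have "{f\<in>insert e F. u \<in> f} = insert e {f\<in>F. u \<in> f}" using e by auto
    hence "degree (insert e F) u = Suc (degree F u)" unfolding degree_def using insert(1,2) by simp
    hence "degree F u \<le> 2" using insert(5)[of u] by simp
    thus ?case using colourable_insert_edge[OF sg deg _ _ e(2) pc] insert(2) e by auto
  qed
qed

section \<open>The triangle-replaced graph\<close>

definition link_edge :: "'v set \<Rightarrow> ('v \<times> 'v set) set" where
  "link_edge e = (\<lambda>a. (a, e)) ` e"

lemma link_edge_meet_eq: "link_edge e \<inter> link_edge f \<noteq> {} \<Longrightarrow> e = f"
  unfolding link_edge_def by auto

lemma link_edge_doubleton: "link_edge {x, y} = {(x, {x, y}), (y, {x, y})}"
  unfolding link_edge_def by auto

locale cubic =
  fixes V :: "'v set" and E :: "'v set set"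
  assumes cubic: "cubic_graph V E"
begin

lemma simple: "simple_graph V E"
  using cubic unfolding cubic_graph_def by simp

lemma finite_V: "finite V"
  by (rule simple_graph_finite[OF simple])

lemma finite_E: "finite E"
  by (rule simple_graph_finite_edges[OF simple])

lemma edgeE:
  assumes "e \<in> E"
  obtains x y where "e = {x, y}" "x \<noteq> y" "x \<in> V" "y \<in> V"
  using assms simple unfolding simple_graph_def by blast

lemma edge_subset: "e \<in> E \<Longrightarrow> e \<subseteq> V"
  by (erule edgeE) simp

lemma card_incident_edges: "v \<in> V \<Longrightarrow> card {e\<in>E. v \<in> e} = 3"
  using cubic unfolding cubic_graph_def degree_def by simp

lemma degree_le_3: "degree E x \<le> 3"
proof (cases "x \<in> V")
  case False
  hence "{e\<in>E. x \<in> e} = {}" using edge_subset by auto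
  thus ?thesis unfolding degree_def by (metis card.empty zero_le)
qed (simp add: degree_def card_incident_edges)

definition third_edge :: "'v \<Rightarrow> 'v set set \<Rightarrow> 'v set" where
  "third_edge v S = (THE g. g \<in> E \<and> v \<in> g \<and> g \<notin> S)"

lemma third_edge:
  assumes "e \<in> E" "f \<in> E" "v \<in> e" "v \<in> f" "e \<noteq> f"
  shows "{g\<in>E. v \<in> g} = {e, f, third_edge v {e, f}}"
    and "third_edge v {e, f} \<in> E" "v \<in> third_edge v {e, f}"
    and "third_edge v {e, f} \<noteq> e" "third_edge v {e, f} \<noteq> f"
proof -
  have "v \<in> V" using assms edge_subset by auto
  hence "card {g\<in>E. v \<in> g} = 3" by (rule card_incident_edges)
  moreover have "{e, f} \<subseteq> {g\<in>E. v \<in> g}" using assms by auto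
  ultimately have "card ({g\<in>E. v \<in> g} - {e, f}) = 1"
    using finite_E assms(5) by (simp add: card_Diff_subset)
  then obtain g where g: "{g\<in>E. v \<in> g} - {e, f} = {g}" by (auto simp: card_1_singleton_iff)
  have "third_edge v {e, f} = g"
    unfolding third_edge_def by (rule the_equality) (use g in blast)+
  with g \<open>{e, f} \<subseteq> {g\<in>E. v \<in> g}\<close>
  show "{g\<in>E. v \<in> g} = {e, f, third_edge v {e, f}}"
    and "third_edge v {e, f} \<in> E" "v \<in> third_edge v {e, f}"
    and "third_edge v {e, f} \<noteq> e" "third_edge v {e, f} \<noteq> f" by blast+
qed

lemma tr_edgesE:
  assumes "X \<in> tr_edges V E"
  obtains (triangle) v e f where "X = {(v, e), (v, f)}" "e \<in> E" "f \<in> E" "v \<in> e" "v \<in> f" "e \<noteq> f"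
    | (link) e where "e \<in> E" "X = link_edge e"
  using assms unfolding tr_edges_def by (auto simp: link_edge_doubleton)

lemma triangle_edge_in_tr_edges:
  assumes "e \<in> E" "f \<in> E" "v \<in> e" "v \<in> f" "e \<noteq> f"
  shows "{(v, e), (v, f)} \<in> tr_edges V E"
proof -
  have "v \<in> V" using assms edge_subset by auto
  thus ?thesis using assms unfolding tr_edges_def by blast
qed

lemma link_edge_neq_triangle_edge:
  assumes "e \<in> E"
  shows "link_edge e \<noteq> {(a, f), (a, g)}"
proof -
  obtain x y where "e = {x, y}" "x \<noteq> y" using edgeE[OF assms] by metis
  thus ?thesis by (auto simp: link_edge_doubleton doubleton_eq_iff)
qed

lemma link_edge_in_tr_edges:
  assumes "e \<in> E"
  shows "link_edge e \<in> tr_edges V E"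
proof -
  obtain x y where "e = {x, y}" "x \<noteq> y" using edgeE[OF assms] by metis
  hence "\<exists>u v. link_edge e = {(u, e), (v, e)} \<and> e \<in> E \<and> e = {u, v} \<and> u \<noteq> v"
    using assms by (auto simp: link_edge_doubleton)
  thus ?thesis unfolding tr_edges_def by blast
qed

lemma simple_tr: "simple_graph (tr_verts V E) (tr_edges V E)"
  unfolding simple_graph_def
proof (intro conjI ballI)
  have "tr_verts V E \<subseteq> V \<times> E" unfolding tr_verts_def by auto
  thus "finite (tr_verts V E)" using finite_V finite_E finite_subset by blast
  fix X assume "X \<in> tr_edges V E"
  thus "\<exists>p q. X = {p, q} \<and> p \<noteq> q \<and> p \<in> tr_verts V E \<and> q \<in> tr_verts V E"
  proof (cases rule: tr_edgesE)
    case (triangle v e f)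
    hence "v \<in> V" using edge_subset by auto
    thus ?thesis using triangle unfolding tr_verts_def
      by (intro exI[of _ "(v, e)"] exI[of _ "(v, f)"]) auto
  next
    case (link e)
    then obtain a b where "e = {a, b}" "a \<noteq> b" "a \<in> V" "b \<in> V" using edgeE by metis
    thus ?thesis using link unfolding tr_verts_def by (auto simp: link_edge_doubleton)
  qed
qed

end

section \<open>Chromatic index\<close>

context cubic
begin

text \<open>The colouring of T(H) induced by a colouring c of H: the link edge of e keeps the
  colour of e, and the triangle edge joining (v,e) and (v,f) takes the colour of the
  third edge of H at v.\<close>

definition tr_colouring :: "('v set \<Rightarrow> nat) \<Rightarrow> ('v \<times> 'v set) set \<Rightarrow> nat" where
  "tr_colouring c X =
     (if card (snd ` X) = 1 then c (the_elem (snd ` X))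
      else c (third_edge (the_elem (fst ` X)) (snd ` X)))"

lemma tr_colouring_triangle: "e \<noteq> f \<Longrightarrow> tr_colouring c {(v, e), (v, f)} = c (third_edge v {e, f})"
  unfolding tr_colouring_def by simp

lemma tr_colouring_link:
  assumes "e \<in> E"
  shows "tr_colouring c (link_edge e) = c e"
proof -
  obtain x y where "e = {x, y}" using edgeE[OF assms] by metis
  hence "snd ` link_edge e = {e}" unfolding link_edge_def by auto
  thus ?thesis unfolding tr_colouring_def by simp
qed

lemma tr_colouring_triangle_neq:
  assumes pc: "proper_edge_colouring E k c"
    and "e \<in> E" "f \<in> E" "v \<in> e" "v \<in> f" "e \<noteq> f" "e' \<in> E" "f' \<in> E" "v \<in> e'" "v \<in> f'" "e' \<noteq> f'"
    and "{e, f} \<noteq> {e', f'}"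
  shows "tr_colouring c {(v, e), (v, f)} \<noteq> tr_colouring c {(v, e'), (v, f')}"
proof -
  note t = third_edge[OF assms(2-6)] and t' = third_edge[OF assms(7-11)]
  have "third_edge v {e, f} \<noteq> third_edge v {e', f'}"
  proof
    assume eq: "third_edge v {e, f} = third_edge v {e', f'}"
    have "{e, f} = {g\<in>E. v \<in> g} - {third_edge v {e, f}}" using t by auto
    also have "\<dots> = {e', f'}" using eq t' by auto
    finally show False using assms(12) by simp
  qed
  thus ?thesis using proper_edge_colouring_eqD[OF pc t(2) t'(2) t(3) t'(3)] assms(6,11)
    by (auto simp: tr_colouring_triangle)
qed

lemma tr_colouring_triangle_link_neq:
  assumes pc: "proper_edge_colouring E k c"
    and "e \<in> E" "f \<in> E" "v \<in> e" "v \<in> f" "e \<noteq> f" "g \<in> E"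
    and "{(v, e), (v, f)} \<inter> link_edge g \<noteq> {}"
  shows "tr_colouring c {(v, e), (v, f)} \<noteq> tr_colouring c (link_edge g)"
proof -
  have "(g = e \<or> g = f) \<and> v \<in> g" using assms(8) unfolding link_edge_def by auto
  thus ?thesis
    using proper_edge_colouring_eqD[OF pc _ assms(7), of "third_edge v {e, f}" v] third_edge[OF assms(2-6)]
    by (auto simp: tr_colouring_triangle[OF assms(6)] tr_colouring_link[OF assms(7)])
qed

lemma proper_tr_colouring:
  assumes pc: "proper_edge_colouring E k c"
  shows "proper_edge_colouring (tr_edges V E) k (tr_colouring c)"
  unfolding proper_edge_colouring_def
proof (intro conjI ballI impI)
  fix X assume X: "X \<in> tr_edges V E"
  thus "tr_colouring c X < k"
    by (cases rule: tr_edgesE)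
       (use pc third_edge(2) in \<open>auto simp: tr_colouring_triangle tr_colouring_link proper_edge_colouring_less\<close>)
  fix Y assume Y: "Y \<in> tr_edges V E" and XY: "X \<noteq> Y \<and> X \<inter> Y \<noteq> {}"
  show "tr_colouring c X \<noteq> tr_colouring c Y"
    using X
  proof (cases rule: tr_edgesE)
    case X: (triangle v e f)
    show ?thesis
      using Y
    proof (cases rule: tr_edgesE)
      case (triangle v' e' f')
      moreover from this have "v' = v" using XY X by auto
      moreover have "{e, f} \<noteq> {e', f'}" using XY X calculation by auto
      ultimately show ?thesis using tr_colouring_triangle_neq[OF pc X(2-6)] X by simp
    next
      case (link g)
      thus ?thesis using tr_colouring_triangle_link_neq[OF pc X(2-6) link(1)] X XY by simp
    qed
  next
    case X: (link g)
    show ?thesis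
      using Y
    proof (cases rule: tr_edgesE)
      case (triangle v e f)
      hence "{(v, e), (v, f)} \<inter> link_edge g \<noteq> {}" using XY X by auto
      thus ?thesis using tr_colouring_triangle_link_neq[OF pc triangle(2-6) X(1)] X triangle by metis
    next
      case (link g')
      thus ?thesis using link_edge_meet_eq[of g g'] XY X by blast
    qed
  qed
qed

text \<open>If the link edges at (v,e) and (v,f) had the same colour, then together with the
  three triangle edges at v they would need four colours.\<close>

lemma proper_edge_colouring_of_tr:
  assumes pc: "proper_edge_colouring (tr_edges V E) k d" and k: "k \<le> 3"
  shows "proper_edge_colouring E k (\<lambda>e. d (link_edge e))"
  unfolding proper_edge_colouring_def
proof (intro conjI ballI impI)
  have P: "d X \<noteq> d Y" if "X \<in> tr_edges V E" "Y \<in> tr_edges V E" "X \<noteq> Y" "X \<inter> Y \<noteq> {}" for X Y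
    using pc that unfolding proper_edge_colouring_def by blast
  have K: "d X < k" if "X \<in> tr_edges V E" for X using pc that unfolding proper_edge_colouring_def by blast
  fix e assume "e \<in> E" thus "d (link_edge e) < k" using K link_edge_in_tr_edges by blast
  fix f assume f: "f \<in> E" and ef: "e \<noteq> f \<and> e \<inter> f \<noteq> {}"
  then obtain v where v: "v \<in> e" "v \<in> f" by auto
  define g where "g = third_edge v {e, f}"
  have g: "g \<in> E" "v \<in> g" "g \<noteq> e" "g \<noteq> f"
    using third_edge[OF \<open>e \<in> E\<close> f v] ef unfolding g_def by auto
  define tef where "tef = {(v, e), (v, f)}"
  define teg where "teg = {(v, e), (v, g)}"
  define tfg where "tfg = {(v, f), (v, g)}"
  have T: "tef \<in> tr_edges V E" "teg \<in> tr_edges V E" "tfg \<in> tr_edges V E"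
    unfolding tef_def teg_def tfg_def using triangle_edge_in_tr_edges \<open>e \<in> E\<close> f g v ef by auto
  have L: "link_edge e \<in> tr_edges V E" "link_edge f \<in> tr_edges V E"
    using link_edge_in_tr_edges \<open>e \<in> E\<close> f by auto
  have ve: "(v, e) \<in> link_edge e" "(v, f) \<in> link_edge f" using v unfolding link_edge_def by auto
  have D: "d tef \<noteq> d teg" "d tef \<noteq> d tfg" "d teg \<noteq> d tfg"
    using P T g ef unfolding tef_def teg_def tfg_def by (auto simp: doubleton_eq_iff)
  have De: "d (link_edge e) \<noteq> d tef" "d (link_edge e) \<noteq> d teg"
    using P[OF L(1) T(1)] P[OF L(1) T(2)] link_edge_neq_triangle_edge[OF \<open>e \<in> E\<close>] ve unfolding tef_def teg_def by auto
  have Df: "d (link_edge f) \<noteq> d tef" "d (link_edge f) \<noteq> d tfg"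
    using P[OF L(2) T(1)] P[OF L(2) T(3)] link_edge_neq_triangle_edge[OF f] ve unfolding tef_def tfg_def
    by (auto simp: insert_commute)
  show "d (link_edge e) \<noteq> d (link_edge f)"
  proof
    assume "d (link_edge e) = d (link_edge f)"
    with D De Df have "card {d (link_edge e), d tef, d teg, d tfg} = 4" by auto
    moreover have "{d (link_edge e), d tef, d teg, d tfg} \<subseteq> {0..<k}" using K T L by auto
    ultimately have "4 \<le> card {0..<k}" by (metis card_mono finite_atLeastLessThan)
    thus False using k by simp
  qed
qed

lemma chromatic_index_tr_edges: "chromatic_index (tr_edges V E) = chromatic_index E"
proof -
  obtain c4 where c4: "proper_edge_colouring E 4 c4"
    using subcubic_edge_colourable[OF simple degree_le_3] by blast
  obtain c where "proper_edge_colouring E (chromatic_index E) c" using proper_edge_colouring_chromatic_index[OF c4] by blast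
  hence ge: "chromatic_index (tr_edges V E) \<le> chromatic_index E"
    by (rule chromatic_index_le[OF proper_tr_colouring])
  obtain d where d: "proper_edge_colouring (tr_edges V E) (chromatic_index (tr_edges V E)) d"
    using proper_edge_colouring_chromatic_index[OF proper_tr_colouring[OF c4]] by blast
  have "chromatic_index E \<le> chromatic_index (tr_edges V E)"
  proof (cases "chromatic_index (tr_edges V E) \<le> 3")
    case True
    show ?thesis by (rule chromatic_index_le[OF proper_edge_colouring_of_tr[OF d True]])
  next
    case False
    thus ?thesis using chromatic_index_le[OF c4] by simp
  qed
  with ge show ?thesis by simp
qed

end

section \<open>Bridges\<close>

definition adj :: "'a set set \<Rightarrow> ('a \<times> 'a) set" where
  "adj E = {(x, y). {x, y} \<in> E}"

lemma reach_adj: "reach V E = {(u, v). u \<in> V \<and> v \<in> V \<and> (u, v) \<in> (adj E)\<^sup>*}"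
  unfolding reach_def adj_def ..

lemma sym_rtrancl_adj: "sym ((adj E)\<^sup>*)"
  by (rule sym_rtrancl) (auto simp: adj_def sym_def insert_commute)

lemma adj_mono: "E \<subseteq> F \<Longrightarrow> (adj E)\<^sup>* \<subseteq> (adj F)\<^sup>*"
  unfolding adj_def by (rule rtrancl_mono) auto

lemma equiv_reach: "equiv V (reach V E)"
proof (rule equivI)
  show "refl_on V (reach V E)" unfolding refl_on_def reach_adj by auto
  show "sym (reach V E)" using sym_rtrancl_adj[of E] unfolding reach_adj sym_def by auto
  show "trans (reach V E)" unfolding reach_adj trans_def by (auto intro: rtrancl_trans)
  show "reach V E \<subseteq> V \<times> V" unfolding reach_adj by auto
qed

lemma card_quotient_less:
  assumes fin: "finite V" and eq: "equiv V R" "equiv V R'" and sub: "R' \<subseteq> R"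
    and xy: "(x, y) \<in> R" "(x, y) \<notin> R'"
  shows "card (V // R) < card (V // R')"
proof -
  have xyV: "x \<in> V" "y \<in> V" using xy(1) eq(1) unfolding equiv_def refl_on_def by auto
  define \<phi> where "\<phi> C = R `` C" for C
  have \<phi>: "\<phi> (R' `` {z}) = R `` {z}" if "z \<in> V" for z
    using sub eq that unfolding \<phi>_def equiv_def refl_on_def trans_def by blast
  have "\<phi> ` (V // R') = V // R"
    unfolding quotient_def using \<phi> by auto
  moreover have "\<not> inj_on \<phi> (V // R')"
  proof
    assume "inj_on \<phi> (V // R')"
    moreover have "R' `` {x} \<in> V // R'" "R' `` {y} \<in> V // R'"
      using xyV unfolding quotient_def by auto
    moreover have "\<phi> (R' `` {x}) = \<phi> (R' `` {y})"
      using \<phi> xyV equiv_class_eq[OF eq(1) xy(1)] by simp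
    ultimately have "R' `` {x} = R' `` {y}" unfolding inj_on_def by blast
    thus False using eq_equiv_class_iff[OF eq(2) xyV] xy(2) by simp
  qed
  moreover have "finite (V // R')" using fin eq(2) by (simp add: finite_quotient equiv_def)
  ultimately show ?thesis
    by (metis card_image_le inj_on_iff_eq_card le_neq_implies_less)
qed

lemma rtrancl_adj_Diff_eq:
  assumes e: "e = {x, y}" and xy: "(x, y) \<in> (adj (E - {e}))\<^sup>*"
  shows "(adj (E - {e}))\<^sup>* = (adj E)\<^sup>*"
proof
  show "(adj (E - {e}))\<^sup>* \<subseteq> (adj E)\<^sup>*" by (rule adj_mono) auto
  have yx: "(y, x) \<in> (adj (E - {e}))\<^sup>*" using sym_rtrancl_adj xy by (rule symD)
  have "adj E \<subseteq> (adj (E - {e}))\<^sup>*"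
  proof
    fix p assume "p \<in> adj E"
    then obtain a b where p: "p = (a, b)" "{a, b} \<in> E" unfolding adj_def by auto
    show "p \<in> (adj (E - {e}))\<^sup>*"
    proof (cases "{a, b} = e")
      case True
      thus ?thesis using e xy yx p by (auto simp: doubleton_eq_iff)
    next
      case False
      thus ?thesis using p unfolding adj_def by auto
    qed
  qed
  thus "(adj E)\<^sup>* \<subseteq> (adj (E - {e}))\<^sup>*" by (metis rtrancl_subset_rtrancl)
qed

lemma bridges_iff_disconnects:
  assumes sg: "simple_graph V E" and e: "e = {x, y}" "e \<in> E"
  shows "e \<in> bridges V E \<longleftrightarrow> (x, y) \<notin> (adj (E - {e}))\<^sup>*"
proof
  assume bridge: "e \<in> bridges V E"
  show "(x, y) \<notin> (adj (E - {e}))\<^sup>*"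
  proof
    assume "(x, y) \<in> (adj (E - {e}))\<^sup>*"
    hence "(adj (E - {e}))\<^sup>* = (adj E)\<^sup>*" by (rule rtrancl_adj_Diff_eq[OF e(1)])
    hence "reach V (E - {e}) = reach V E" by (simp only: reach_adj)
    thus False using bridge unfolding bridges_def num_components_def by simp
  qed
next
  assume nxy: "(x, y) \<notin> (adj (E - {e}))\<^sup>*"
  have "x \<in> V" "y \<in> V" using simple_graph_Union_subset[OF sg] e by auto
  hence "(x, y) \<in> reach V E" "(x, y) \<notin> reach V (E - {e})"
    using e nxy unfolding reach_adj adj_def by auto
  moreover have "reach V (E - {e}) \<subseteq> reach V E" using adj_mono[of "E - {e}" E] unfolding reach_adj by auto
  ultimately have "card (V // reach V E) < card (V // reach V (E - {e}))"
    by (intro card_quotient_less simple_graph_finite[OF sg] equiv_reach)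
  thus "e \<in> bridges V E" using e unfolding bridges_def num_components_def by auto
qed

context cubic
begin

lemma triangle_connected:
  assumes "f \<in> E" "g \<in> E" "a \<in> f" "a \<in> g" "e \<in> E"
  shows "((a, f), (a, g)) \<in> (adj (tr_edges V E - {link_edge e}))\<^sup>*"
proof (cases "f = g")
  case False
  hence "{(a, f), (a, g)} \<in> tr_edges V E - {link_edge e}"
    using triangle_edge_in_tr_edges[OF assms(1-4)] link_edge_neq_triangle_edge[OF assms(5)]
    by (metis DiffI singletonD)
  hence "((a, f), (a, g)) \<in> adj (tr_edges V E - {link_edge e})" unfolding adj_def by simp
  thus ?thesis by (rule r_into_rtrancl)
qed simp

text \<open>The lifted path passes through the triangles at the vertices of the original one.\<close>

lemma lift_path:
  assumes "(a, b) \<in> (adj (E - {e}))\<^sup>*" "e \<in> E"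
    and "f \<in> E" "g \<in> E" "a \<in> f" "b \<in> g"
  shows "((a, f), (b, g)) \<in> (adj (tr_edges V E - {link_edge e}))\<^sup>*"
  using assms(1,4,6)
proof (induction arbitrary: g rule: rtrancl_induct)
  case base
  thus ?case using triangle_connected assms(2,3,5) by blast
next
  case (step c b)
  define h where "h = {c, b}"
  have h: "h \<in> E" "h \<noteq> e" "c \<in> h" "b \<in> h" using step(2) unfolding adj_def h_def by auto
  have "link_edge h \<noteq> link_edge e"
  proof
    assume "link_edge h = link_edge e"
    moreover have "(c, h) \<in> link_edge h" using h(3) unfolding link_edge_def by auto
    ultimately show False using link_edge_meet_eq[of h e] h(2) by auto
  qed
  hence "((c, h), (b, h)) \<in> adj (tr_edges V E - {link_edge e})"
    using link_edge_in_tr_edges[OF h(1)] unfolding adj_def h_def by (auto simp: link_edge_doubleton)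
  thus ?case
    using step.IH[OF h(1,3)] triangle_connected[OF h(1) step(4) h(4) step(5) assms(2)]
    by (meson rtrancl_into_rtrancl rtrancl_trans)
qed

lemma project_path:
  assumes "(p, q) \<in> (adj (tr_edges V E - {link_edge e}))\<^sup>*"
  shows "(fst p, fst q) \<in> (adj (E - {e}))\<^sup>*"
  using assms
proof (induction rule: rtrancl_induct)
  case (step q r)
  have qr: "{q, r} \<in> tr_edges V E" "{q, r} \<noteq> link_edge e" using step(2) unfolding adj_def by auto
  from qr(1) have "fst q = fst r \<or> (fst q, fst r) \<in> adj (E - {e})"
  proof (cases rule: tr_edgesE)
    case (triangle v e1 f1)
    thus ?thesis by (auto simp: doubleton_eq_iff)
  next
    case (link h)
    obtain a b where ab: "h = {a, b}" "a \<noteq> b" using edgeE[OF link(1)] by metis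
    hence "{fst q, fst r} = h" using link(2) by (auto simp: link_edge_doubleton doubleton_eq_iff)
    thus ?thesis using link qr(2) unfolding adj_def by auto
  qed
  thus ?case using step.IH by (auto intro: rtrancl_into_rtrancl)
qed simp

lemma triangle_edge_not_bridge:
  assumes "e \<in> E" "f \<in> E" "v \<in> e" "v \<in> f" "e \<noteq> f"
  shows "{(v, e), (v, f)} \<notin> bridges (tr_verts V E) (tr_edges V E)"
proof -
  note t = third_edge[OF assms]
  define g where "g = third_edge v {e, f}"
  define T where "T = tr_edges V E - {{(v, e), (v, f)}}"
  have "{(v, e), (v, g)} \<in> T" "{(v, g), (v, f)} \<in> T"
    using triangle_edge_in_tr_edges[OF assms(1) t(2) assms(3) t(3)]
      triangle_edge_in_tr_edges[OF t(2) assms(2) t(3) assms(4)] t(4,5)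
    unfolding g_def T_def by (auto simp: doubleton_eq_iff)
  hence "((v, e), (v, g)) \<in> adj T" "((v, g), (v, f)) \<in> adj T" unfolding adj_def by simp_all
  hence "((v, e), (v, f)) \<in> (adj T)\<^sup>*" by (meson r_into_rtrancl rtrancl_into_rtrancl)
  thus ?thesis
    using bridges_iff_disconnects[OF simple_tr refl triangle_edge_in_tr_edges[OF assms]]
    unfolding T_def by auto
qed

lemma link_edge_bridge_iff:
  assumes "e \<in> E"
  shows "link_edge e \<in> bridges (tr_verts V E) (tr_edges V E) \<longleftrightarrow> e \<in> bridges V E"
proof -
  obtain x y where xy: "e = {x, y}" "x \<noteq> y" using edgeE[OF assms] by metis
  have "link_edge e \<in> bridges (tr_verts V E) (tr_edges V E)
      \<longleftrightarrow> ((x, e), (y, e)) \<notin> (adj (tr_edges V E - {link_edge e}))\<^sup>*"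
    using bridges_iff_disconnects[OF simple_tr _ link_edge_in_tr_edges[OF assms]] xy
    by (simp add: link_edge_doubleton)
  also have "\<dots> \<longleftrightarrow> (x, y) \<notin> (adj (E - {e}))\<^sup>*"
    using lift_path[of x y e e e] project_path[of "(x, e)" "(y, e)" e] assms xy by auto
  also have "\<dots> \<longleftrightarrow> e \<in> bridges V E"
    using bridges_iff_disconnects[OF simple xy(1) assms] by simp
  finally show ?thesis .
qed

lemma bridges_tr: "bridges (tr_verts V E) (tr_edges V E) = link_edge ` bridges V E"
proof
  show "bridges (tr_verts V E) (tr_edges V E) \<subseteq> link_edge ` bridges V E"
  proof
    fix X assume X: "X \<in> bridges (tr_verts V E) (tr_edges V E)"
    hence "X \<in> tr_edges V E" unfolding bridges_def by auto
    thus "X \<in> link_edge ` bridges V E"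
      by (cases rule: tr_edgesE) (use triangle_edge_not_bridge link_edge_bridge_iff X in auto)
  qed
  show "link_edge ` bridges V E \<subseteq> bridges (tr_verts V E) (tr_edges V E)"
    using link_edge_bridge_iff unfolding bridges_def by auto
qed

lemma card_bridges_tr: "card (bridges (tr_verts V E) (tr_edges V E)) = card (bridges V E)"
proof -
  have "inj_on link_edge E"
  proof (rule inj_onI)
    fix e f assume "e \<in> E" "f \<in> E" "link_edge e = link_edge f"
    moreover obtain x y where "e = {x, y}" using edgeE[OF \<open>e \<in> E\<close>] by metis
    ultimately show "e = f" using link_edge_meet_eq[of e f] by (auto simp: link_edge_doubleton)
  qed
  hence "inj_on link_edge (bridges V E)" by (rule inj_on_subset) (auto simp: bridges_def)
  thus ?thesis unfolding bridges_tr by (rule card_image)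
qed

end

section \<open>The 2-conversion number\<close>

context cubic
begin

lemma card_tr_verts: "card (tr_verts V E) = 3 * card V"
proof -
  have "tr_verts V E = (SIGMA v:V. {e\<in>E. v \<in> e})" unfolding tr_verts_def by auto
  hence "card (tr_verts V E) = (\<Sum>v\<in>V. card {e\<in>E. v \<in> e})"
    using finite_V finite_E by (simp add: card_SigmaI)
  also have "\<dots> = (\<Sum>v\<in>V. 3)" by (rule sum.cong) (simp_all add: card_incident_edges)
  finally show ?thesis by simp
qed

lemma neighbour_outside_triangle:
  assumes "{p, (v, e)} \<in> tr_edges V E" "fst p \<noteq> v"
  shows "p \<in> (\<lambda>x. (x, e)) ` (e - {v})"
  using assms(1)
proof (cases rule: tr_edgesE)
  case (triangle w e1 f1)
  thus ?thesis using assms(2) by (auto simp: doubleton_eq_iff)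
next
  case (link h)
  hence "(v, e) \<in> link_edge h" and p: "p \<in> link_edge h" by auto
  hence "h = e" unfolding link_edge_def by auto
  then obtain a where "a \<in> e" "p = (a, e)" using p unfolding link_edge_def by auto
  thus ?thesis using assms(2) by auto
qed

lemma conv_step_avoids_triangle:
  assumes "\<forall>f. (v, f) \<notin> S"
  shows "\<forall>f. (v, f) \<notin> conv_step (tr_verts V E) (tr_edges V E) S"
proof (intro allI notI)
  fix e assume "(v, e) \<in> conv_step (tr_verts V E) (tr_edges V E) S"
  hence "(v, e) \<in> tr_verts V E" and two: "2 \<le> card {p\<in>S. {p, (v, e)} \<in> tr_edges V E}"
    using assms unfolding conv_step_def by auto
  hence "e \<in> E" "v \<in> e" unfolding tr_verts_def by auto
  then obtain x where "e = {v, x}" "v \<noteq> x" using simple_graph_edgeE[OF simple] by metis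
  hence "e - {v} = {x}" by auto
  have "{p\<in>S. {p, (v, e)} \<in> tr_edges V E} \<subseteq> (\<lambda>x. (x, e)) ` (e - {v})"
  proof
    fix p assume p: "p \<in> {p\<in>S. {p, (v, e)} \<in> tr_edges V E}"
    hence "fst p \<noteq> v" using assms by (metis (mono_tags, lifting) mem_Collect_eq prod.collapse)
    thus "p \<in> (\<lambda>x. (x, e)) ` (e - {v})" using neighbour_outside_triangle p by blast
  qed
  also have "\<dots> = {(x, e)}" using \<open>e - {v} = {x}\<close> by simp
  finally have "card {p\<in>S. {p, (v, e)} \<in> tr_edges V E} \<le> card {(x, e)}" by (rule card_mono[rotated]) simp
  thus False using two by simp
qed

lemma conversion_set_meets_triangle:
  assumes S: "is_2conv_set (tr_verts V E) (tr_edges V E) S" and v: "v \<in> V"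
  shows "\<exists>e. (v, e) \<in> S"
proof (rule ccontr)
  assume "\<not> ?thesis"
  hence avoid: "\<forall>f. (v, f) \<notin> (conv_step (tr_verts V E) (tr_edges V E) ^^ t) S" for t
  proof (induction t)
    case (Suc t)
    thus ?case using conv_step_avoids_triangle by simp
  qed simp
  obtain t where "(conv_step (tr_verts V E) (tr_edges V E) ^^ t) S = tr_verts V E"
    using S unfolding is_2conv_set_def by auto
  moreover have "{e\<in>E. v \<in> e} \<noteq> {}"
    using card_incident_edges[OF v] by (metis card.empty zero_neq_numeral)
  then obtain e where "e \<in> E" "v \<in> e" by auto
  hence "(v, e) \<in> tr_verts V E" using v unfolding tr_verts_def by auto
  ultimately show False using avoid[of t] by auto
qed

lemma card_le_conversion_set:
  assumes S: "is_2conv_set (tr_verts V E) (tr_edges V E) S"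
  shows "card V \<le> card S"
proof -
  define pick where "pick v = (v, SOME e. (v, e) \<in> S)" for v
  have "pick v \<in> S" if "v \<in> V" for v
    unfolding pick_def using conversion_set_meets_triangle[OF S that] by (rule someI_ex)
  hence "pick ` V \<subseteq> S" by blast
  moreover have "inj_on pick V" unfolding pick_def inj_on_def by auto
  moreover have "finite S" using S simple_tr unfolding is_2conv_set_def simple_graph_def
    by (meson finite_subset)
  ultimately show ?thesis by (metis card_image card_mono)
qed

lemma card_le_c2: "card V \<le> c2 (tr_verts V E) (tr_edges V E)"
proof -
  have "is_2conv_set (tr_verts V E) (tr_edges V E) (tr_verts V E)"
    unfolding is_2conv_set_def by (auto intro: exI[of _ 0])
  hence "\<exists>k S. is_2conv_set (tr_verts V E) (tr_edges V E) S \<and> card S = k" by blast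
  hence "\<exists>S. is_2conv_set (tr_verts V E) (tr_edges V E) S \<and> card S = c2 (tr_verts V E) (tr_edges V E)"
    unfolding c2_def by (rule LeastI_ex)
  thus ?thesis using card_le_conversion_set by metis
qed

end

lemma floor_ceiling_gap:
  fixes c m :: nat
  assumes "m \<le> c"
  shows "int c - \<lceil>(real (3 * m) + 2) / 4\<rceil> \<ge> \<lfloor>(real m - 2) / 4\<rfloor>"
proof -
  define a where "a = \<lfloor>(real m - 2) / 4\<rfloor>"
  have "real_of_int a \<le> (real m - 2) / 4" unfolding a_def by (rule of_int_floor_le)
  hence "\<lceil>(real (3 * m) + 2) / 4\<rceil> \<le> int m - a" by (simp add: ceiling_le_iff)
  thus ?thesis using assms unfolding a_def by linarith
qed

theorem proposition5p11:
  fixes V :: "'v set" and E :: "'v set set" and m :: nat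
  assumes "cubic_graph V E" and "card V = m"
  shows "int (c2 (tr_verts V E) (tr_edges V E))
           - \<lceil>(real (card (tr_verts V E)) + 2) / 4\<rceil> \<ge> \<lfloor>(real m - 2) / 4\<rfloor>
         \<and> card (bridges (tr_verts V E) (tr_edges V E)) = card (bridges V E)
         \<and> chromatic_index (tr_edges V E) = chromatic_index E"
proof -
  interpret cubic V E by (rule cubic.intro[OF assms(1)])
  show ?thesis
    using floor_ceiling_gap[OF card_le_c2] card_tr_verts assms(2) card_bridges_tr chromatic_index_tr_edges
    by simp
qed

end
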